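(* Let $n\ge2$ and $1\le k\le n$. Let ${}^1\mathcal M_n^k$ (resp. ${}^n\mathcal M_n^k$) be the set of monotone permutations $\pi\in S_n$ with $\pi(1)=k$ and $\pi(n)=1$ (resp. $\pi(n)=n$). For $\pi\in{}^1\mathcal M_n^k$ define $\tilde\pi\in S_{n-1}$ by $\tilde\pi(i)=\pi(i)-1$, and for $\pi\in{}^n\mathcal M_n^k$ by $\tilde\pi(i)=\pi(i)$, $i=1,\dots,n-1$. Then $\pi\mapsto\tilde\pi$ is a bijection ${}^1\mathcal M_n^k\to\mathcal M_{n-1}^{k-1}$ (resp. ${}^n\mathcal M_n^k\to\mathcal M_{n-1}^{k}$), and $(-1)^{\operatorname{dr}(\tilde\pi)}=(-1)^{\operatorname{dr}(\pi)+n}$ (resp. $(-1)^{\operatorname{dr}(\tilde\pi)}=(-1)^{\operatorname{dr}(\pi)}$).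
   Context: A permutation $\pi\in S_n$ is monotone if, for each $i=1,\dots,n$, either $\pi(j)<\pi(i)$ for all $j<i$, or $\pi(j)>\pi(i)$ for all $j<i$; in the second case $i$ is called a drop of $\pi$ ($i=1$ is not a drop). $\mathcal M_n^k$ denotes the set of monotone permutations with $\pi(1)=k$, and $\operatorname{dr}(\pi)$ the sum of all drops of $\pi$. *)

theory Defs
  imports "HOL-Combinatorics.Permutations"
begin

text \<open>Permutations of S_n are functions nat => nat permuting {1..n} (identity elsewhere).\<close>

definition monotone_perm :: "nat \<Rightarrow> (nat \<Rightarrow> nat) \<Rightarrow> bool" where
  "monotone_perm n \<pi> \<longleftrightarrow>
     (\<forall>i\<in>{1..n}. (\<forall>j\<in>{1..<i}. \<pi> j < \<pi> i) \<or> (\<forall>j\<in>{1..<i}. \<pi> j > \<pi> i))"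

definition is_drop :: "nat \<Rightarrow> (nat \<Rightarrow> nat) \<Rightarrow> nat \<Rightarrow> bool" where
  "is_drop n \<pi> i \<longleftrightarrow> i \<in> {2..n} \<and> (\<forall>j\<in>{1..<i}. \<pi> j > \<pi> i)"

definition dr :: "nat \<Rightarrow> (nat \<Rightarrow> nat) \<Rightarrow> nat" where
  "dr n \<pi> = (\<Sum>i\<in>{i\<in>{1..n}. is_drop n \<pi> i}. i)"

definition Mon :: "nat \<Rightarrow> nat \<Rightarrow> (nat \<Rightarrow> nat) set" where
  "Mon n k = {\<pi>. \<pi> permutes {1..n} \<and> monotone_perm n \<pi> \<and> \<pi> 1 = k}"

definition Mon_end1 :: "nat \<Rightarrow> nat \<Rightarrow> (nat \<Rightarrow> nat) set" where
  "Mon_end1 n k = {\<pi>\<in>Mon n k. \<pi> n = 1}"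

definition Mon_endn :: "nat \<Rightarrow> nat \<Rightarrow> (nat \<Rightarrow> nat) set" where
  "Mon_endn n k = {\<pi>\<in>Mon n k. \<pi> n = n}"

definition tilde1 :: "nat \<Rightarrow> (nat \<Rightarrow> nat) \<Rightarrow> (nat \<Rightarrow> nat)" where
  "tilde1 n \<pi> = (\<lambda>i. if i \<in> {1..n-1} then \<pi> i - 1 else i)"

definition tilden :: "nat \<Rightarrow> (nat \<Rightarrow> nat) \<Rightarrow> (nat \<Rightarrow> nat)" where
  "tilden n \<pi> = (\<lambda>i. if i \<in> {1..n-1} then \<pi> i else i)"

end

theory Submission
  imports Defs
begin

text \<open>Monotonicity and drops only depend on the relative order of the values, and the
  conditions at positions \<open>1..m\<close> never look at position \<open>m + 1\<close>. If \<open>\<pi>\<close> ends in \<open>1\<close>,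
  subtracting \<open>1\<close> from the other values keeps their relative order, so monotonicity and all
  drops before \<open>n\<close> survive, while \<open>n\<close> itself is a drop: \<open>dr \<pi> = dr \<pi>\<tilde> + n\<close>. If \<open>\<pi>\<close> ends
  in \<open>n\<close>, then \<open>\<pi>\<tilde> = \<pi>\<close> already permutes \<open>{1..n-1}\<close> and \<open>n\<close> is not a drop.\<close>

lemma finite_inj_on_endo_imp_permutes:
  assumes "finite S" "f ` S \<subseteq> S" "inj_on f S" "\<And>x. x \<notin> S \<Longrightarrow> f x = x"
  shows "f permutes S"
proof (rule bij_imp_permutes)
  show "bij_betw f S S"
    using assms endo_inj_surj[of S f] by (simp add: bij_betw_def)
qed (use assms in auto)

lemma monotone_perm_cong_order:
  assumes "\<And>i j. i \<in> {1..m} \<Longrightarrow> j \<in> {1..m} \<Longrightarrow> \<pi> i < \<pi> j \<longleftrightarrow> \<sigma> i < \<sigma> j"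
  shows "monotone_perm m \<pi> \<longleftrightarrow> monotone_perm m \<sigma>"
proof -
  have "j \<in> {1..m}" if "i \<in> {1..m}" "j \<in> {1..<i}" for i j
    using that by auto
  then show ?thesis
    unfolding monotone_perm_def using assms by (metis (no_types, lifting))
qed

lemma is_drop_cong_order:
  assumes "\<And>i j. i \<in> {1..m} \<Longrightarrow> j \<in> {1..m} \<Longrightarrow> \<pi> i < \<pi> j \<longleftrightarrow> \<sigma> i < \<sigma> j"
  shows "is_drop m \<pi> i \<longleftrightarrow> is_drop m \<sigma> i"
proof -
  have "j \<in> {1..m}" if "i \<in> {2..m}" "j \<in> {1..<i}" for j
    using that by auto
  then show ?thesis
    unfolding is_drop_def using assms by (metis (no_types, lifting) atLeastAtMost_iff le_trans one_le_numeral)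
qed

lemma dr_cong_order:
  assumes "\<And>i j. i \<in> {1..m} \<Longrightarrow> j \<in> {1..m} \<Longrightarrow> \<pi> i < \<pi> j \<longleftrightarrow> \<sigma> i < \<sigma> j"
  shows "dr m \<pi> = dr m \<sigma>"
  unfolding dr_def using is_drop_cong_order[OF assms] by presburger

lemma monotone_perm_Suc:
  "monotone_perm (Suc m) \<pi> \<longleftrightarrow> monotone_perm m \<pi> \<and>
     ((\<forall>j\<in>{1..m}. \<pi> j < \<pi> (Suc m)) \<or> (\<forall>j\<in>{1..m}. \<pi> (Suc m) < \<pi> j))"
proof -
  have "{1..Suc m} = insert (Suc m) {1..m}" "{1..<Suc m} = {1..m}"
    by auto
  then show ?thesis
    unfolding monotone_perm_def by auto
qed

lemma is_drop_Suc:
  "i \<le> m \<Longrightarrow> is_drop (Suc m) \<pi> i \<longleftrightarrow> is_drop m \<pi> i"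
  by (auto simp: is_drop_def)

lemma is_drop_last:
  "is_drop (Suc m) \<pi> (Suc m) \<longleftrightarrow> 1 \<le> m \<and> (\<forall>j\<in>{1..m}. \<pi> (Suc m) < \<pi> j)"
  by (auto simp: is_drop_def)

lemma dr_Suc:
  "dr (Suc m) \<pi> = dr m \<pi> + (if is_drop (Suc m) \<pi> (Suc m) then Suc m else 0)"
proof -
  have drops: "{i\<in>{1..Suc m}. is_drop (Suc m) \<pi> i} =
      (if is_drop (Suc m) \<pi> (Suc m) then insert (Suc m) else id) {i\<in>{1..m}. is_drop m \<pi> i}"
    using is_drop_Suc by (auto simp: le_Suc_eq)
  show ?thesis
    unfolding dr_def drops by simp
qed

definition tilde1_inv :: "nat \<Rightarrow> (nat \<Rightarrow> nat) \<Rightarrow> nat \<Rightarrow> nat" where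
  "tilde1_inv n \<sigma> = (\<lambda>i. if i \<in> {1..n-1} then \<sigma> i + 1 else if i = n then 1 else i)"

lemma permutes_last_one_other_values:
  assumes "\<pi> permutes {1..Suc m}" "\<pi> (Suc m) = 1" "i \<in> {1..m}"
  shows "\<pi> i \<in> {2..Suc m}"
proof -
  have "\<pi> i \<noteq> \<pi> (Suc m)"
    using assms(3) by (auto simp: inj_eq[OF permutes_inj[OF assms(1)]])
  then show ?thesis
    using permutes_in_image[OF assms(1), of i] assms(2,3) by auto
qed

lemma tilde1_less_iff:
  assumes "\<pi> permutes {1..Suc m}" "i \<in> {1..m}" "j \<in> {1..m}"
  shows "tilde1 (Suc m) \<pi> i < tilde1 (Suc m) \<pi> j \<longleftrightarrow> \<pi> i < \<pi> j"
proof -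
  have "1 \<le> \<pi> i" "1 \<le> \<pi> j"
    using permutes_in_image[OF assms(1), of i] permutes_in_image[OF assms(1), of j] assms(2,3)
    by auto
  then show ?thesis
    using assms(2,3) by (simp add: tilde1_def less_diff_iff)
qed

lemma tilde1_permutes:
  assumes "\<pi> permutes {1..Suc m}" "\<pi> (Suc m) = 1"
  shows "tilde1 (Suc m) \<pi> permutes {1..m}"
proof (rule finite_inj_on_endo_imp_permutes)
  show "tilde1 (Suc m) \<pi> ` {1..m} \<subseteq> {1..m}"
    using permutes_last_one_other_values[OF assms] by (force simp: tilde1_def)
  show "inj_on (tilde1 (Suc m) \<pi>) {1..m}"
  proof (rule inj_onI)
    fix i j assume "i \<in> {1..m}" "j \<in> {1..m}" "tilde1 (Suc m) \<pi> i = tilde1 (Suc m) \<pi> j"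
    then have "\<pi> i = \<pi> j"
      using permutes_last_one_other_values[OF assms, of i] permutes_last_one_other_values[OF assms, of j]
      by (auto simp: tilde1_def)
    then show "i = j"
      using permutes_inj[OF assms(1)] by (auto dest: injD)
  qed
qed (auto simp: tilde1_def)

lemma tilde1_inv_permutes:
  assumes "\<sigma> permutes {1..m}"
  shows "tilde1_inv (Suc m) \<sigma> permutes {1..Suc m}"
proof (rule finite_inj_on_endo_imp_permutes)
  show "tilde1_inv (Suc m) \<sigma> ` {1..Suc m} \<subseteq> {1..Suc m}"
  proof (rule image_subsetI)
    fix i assume "i \<in> {1..Suc m}"
    then show "tilde1_inv (Suc m) \<sigma> i \<in> {1..Suc m}"
      using permutes_in_image[OF assms, of i] by (auto simp: tilde1_inv_def)
  qed
  have "tilde1_inv (Suc m) \<sigma> i \<noteq> tilde1_inv (Suc m) \<sigma> (Suc m)" if "i \<in> {1..m}" for i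
    using that permutes_in_image[OF assms, of i] by (simp add: tilde1_inv_def)
  moreover have "tilde1_inv (Suc m) \<sigma> i = tilde1_inv (Suc m) \<sigma> j \<longleftrightarrow> i = j"
    if "i \<in> {1..m}" "j \<in> {1..m}" for i j
    using that by (simp add: tilde1_inv_def inj_eq[OF permutes_inj[OF assms]])
  ultimately show "inj_on (tilde1_inv (Suc m) \<sigma>) {1..Suc m}"
    unfolding inj_on_def by (metis atLeastAtMost_iff le_Suc_eq)
qed (auto simp: tilde1_inv_def)

lemma tilde1_tilde1_inv:
  assumes "\<sigma> permutes {1..m}"
  shows "tilde1 (Suc m) (tilde1_inv (Suc m) \<sigma>) = \<sigma>"
  using permutes_not_in[OF assms] by (auto simp: fun_eq_iff tilde1_def tilde1_inv_def)

lemma tilde1_inv_tilde1: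
  assumes "\<pi> permutes {1..Suc m}" "\<pi> (Suc m) = 1"
  shows "tilde1_inv (Suc m) (tilde1 (Suc m) \<pi>) = \<pi>"
proof
  fix i show "tilde1_inv (Suc m) (tilde1 (Suc m) \<pi>) i = \<pi> i"
    using assms(2) permutes_not_in[OF assms(1), of i] permutes_last_one_other_values[OF assms, of i]
    by (cases "i = Suc m") (auto simp: tilde1_def tilde1_inv_def)
qed

lemma tilde1_mem_Mon:
  assumes "\<pi> \<in> Mon_end1 (Suc m) k" "1 \<le> m"
  shows "tilde1 (Suc m) \<pi> \<in> Mon m (k - 1)"
proof -
  have \<pi>: "\<pi> permutes {1..Suc m}" "\<pi> (Suc m) = 1" "monotone_perm (Suc m) \<pi>" "\<pi> 1 = k"
    using assms(1) by (auto simp: Mon_end1_def Mon_def)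
  have "monotone_perm m (tilde1 (Suc m) \<pi>)"
    using \<pi>(3) monotone_perm_cong_order[of m "tilde1 (Suc m) \<pi>" \<pi>] tilde1_less_iff[OF \<pi>(1)]
    by (simp add: monotone_perm_Suc)
  moreover have "tilde1 (Suc m) \<pi> 1 = k - 1"
    using \<pi>(4) assms(2) by (simp add: tilde1_def)
  ultimately show ?thesis
    using tilde1_permutes[OF \<pi>(1,2)] by (simp add: Mon_def)
qed

lemma tilde1_inv_mem_Mon_end1:
  assumes "\<sigma> \<in> Mon m (k - 1)" "1 \<le> m" "1 \<le> k"
  shows "tilde1_inv (Suc m) \<sigma> \<in> Mon_end1 (Suc m) k"
proof -
  let ?\<pi> = "tilde1_inv (Suc m) \<sigma>"
  have \<sigma>: "\<sigma> permutes {1..m}" "monotone_perm m \<sigma>" "\<sigma> 1 = k - 1"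
    using assms(1) by (auto simp: Mon_def)
  have "?\<pi> i < ?\<pi> j \<longleftrightarrow> \<sigma> i < \<sigma> j" if "i \<in> {1..m}" "j \<in> {1..m}" for i j
    using that by (simp add: tilde1_inv_def)
  then have "monotone_perm m ?\<pi>"
    using \<sigma>(2) monotone_perm_cong_order by blast
  moreover have "?\<pi> (Suc m) < ?\<pi> j" if "j \<in> {1..m}" for j
    using that permutes_in_image[OF \<sigma>(1), of j] by (simp add: tilde1_inv_def)
  ultimately have "monotone_perm (Suc m) ?\<pi>"
    by (simp add: monotone_perm_Suc)
  moreover have "?\<pi> 1 = k" "?\<pi> (Suc m) = 1"
    using \<sigma>(3) assms(2,3) by (simp_all add: tilde1_inv_def)
  ultimately show ?thesis
    using tilde1_inv_permutes[OF \<sigma>(1)] by (simp add: Mon_end1_def Mon_def)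
qed

lemma bij_betw_tilde1:
  assumes "1 \<le> m" "1 \<le> k"
  shows "bij_betw (tilde1 (Suc m)) (Mon_end1 (Suc m) k) (Mon m (k - 1))"
proof (rule bij_betw_byWitness[where f' = "tilde1_inv (Suc m)"])
  show "\<forall>\<pi>\<in>Mon_end1 (Suc m) k. tilde1_inv (Suc m) (tilde1 (Suc m) \<pi>) = \<pi>"
    by (simp add: Mon_end1_def Mon_def tilde1_inv_tilde1)
  show "\<forall>\<sigma>\<in>Mon m (k - 1). tilde1 (Suc m) (tilde1_inv (Suc m) \<sigma>) = \<sigma>"
    by (simp add: Mon_def tilde1_tilde1_inv)
  show "tilde1 (Suc m) ` Mon_end1 (Suc m) k \<subseteq> Mon m (k - 1)"
    using tilde1_mem_Mon assms(1) by blast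
  show "tilde1_inv (Suc m) ` Mon m (k - 1) \<subseteq> Mon_end1 (Suc m) k"
    using tilde1_inv_mem_Mon_end1 assms by blast
qed

lemma dr_tilde1:
  assumes "\<pi> \<in> Mon_end1 (Suc m) k" "1 \<le> m"
  shows "dr (Suc m) \<pi> = dr m (tilde1 (Suc m) \<pi>) + Suc m"
proof -
  have \<pi>: "\<pi> permutes {1..Suc m}" "\<pi> (Suc m) = 1"
    using assms(1) by (auto simp: Mon_end1_def Mon_def)
  have "is_drop (Suc m) \<pi> (Suc m)"
    using permutes_last_one_other_values[OF \<pi>] \<pi>(2) assms(2) by (force simp: is_drop_last)
  moreover have "dr m \<pi> = dr m (tilde1 (Suc m) \<pi>)"
    using dr_cong_order tilde1_less_iff[OF \<pi>(1)] by metis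
  ultimately show ?thesis
    by (simp add: dr_Suc)
qed

lemma tilden_eq_self:
  assumes "\<pi> permutes {1..Suc m}" "\<pi> (Suc m) = Suc m"
  shows "tilden (Suc m) \<pi> = \<pi>"
proof
  fix i show "tilden (Suc m) \<pi> i = \<pi> i"
    using assms(2) permutes_not_in[OF assms(1), of i] by (cases "i = Suc m") (auto simp: tilden_def)
qed

lemma dr_Suc_fixed_last:
  assumes "\<pi> permutes {1..Suc m}" "\<pi> (Suc m) = Suc m"
  shows "dr (Suc m) \<pi> = dr m \<pi>"
proof -
  have "\<pi> 1 \<le> Suc m"
    using permutes_in_image[OF assms(1), of 1] by simp
  then have "\<not> is_drop (Suc m) \<pi> (Suc m)"
    using assms(2) by (auto simp: is_drop_last intro!: bexI[of _ 1])
  then show ?thesis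
    by (simp add: dr_Suc)
qed

lemma Mon_endn_Suc_eq_Mon: "Mon_endn (Suc m) k = Mon m k"
proof (intro set_eqI iffI)
  fix \<pi> assume "\<pi> \<in> Mon_endn (Suc m) k"
  then have \<pi>: "\<pi> permutes {1..Suc m}" "\<pi> (Suc m) = Suc m" "monotone_perm (Suc m) \<pi>" "\<pi> 1 = k"
    by (auto simp: Mon_endn_def Mon_def)
  have "\<pi> permutes {1..m}"
    by (rule permutes_superset[OF \<pi>(1)]) (use \<pi>(2) le_Suc_eq in auto)
  with \<pi>(3,4) show "\<pi> \<in> Mon m k"
    by (simp add: Mon_def monotone_perm_Suc)
next
  fix \<sigma> assume "\<sigma> \<in> Mon m k"
  then have \<sigma>: "\<sigma> permutes {1..m}" "monotone_perm m \<sigma>" "\<sigma> 1 = k"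
    by (auto simp: Mon_def)
  have last: "\<sigma> (Suc m) = Suc m"
    using permutes_not_in[OF \<sigma>(1)] by simp
  have "\<sigma> j < \<sigma> (Suc m)" if "j \<in> {1..m}" for j
    using permutes_in_image[OF \<sigma>(1), of j] that last by simp
  then have "monotone_perm (Suc m) \<sigma>"
    using \<sigma>(2) by (simp add: monotone_perm_Suc)
  moreover have "\<sigma> permutes {1..Suc m}"
    using \<sigma>(1) by (rule permutes_subset) auto
  ultimately show "\<sigma> \<in> Mon_endn (Suc m) k"
    using \<sigma>(3) last by (simp add: Mon_endn_def Mon_def)
qed

lemma bij_betw_tilden: "bij_betw (tilden (Suc m)) (Mon_endn (Suc m) k) (Mon m k)"
proof -
  have "tilden (Suc m) \<pi> = id \<pi>" if "\<pi> \<in> Mon_endn (Suc m) k" for \<pi>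
    using that tilden_eq_self by (simp add: Mon_endn_def Mon_def)
  moreover have "bij_betw id (Mon_endn (Suc m) k) (Mon m k)"
    by (simp add: Mon_endn_Suc_eq_Mon)
  ultimately show ?thesis
    using bij_betw_cong by blast
qed

theorem lemma2p8:
  fixes n k :: nat
  assumes "2 \<le> n" and "1 \<le> k" and "k \<le> n"
  shows "bij_betw (tilde1 n) (Mon_end1 n k) (Mon (n-1) (k-1))
       \<and> (\<forall>\<pi>\<in>Mon_end1 n k. (-1::int) ^ dr (n-1) (tilde1 n \<pi>) = (-1) ^ (dr n \<pi> + n))
       \<and> bij_betw (tilden n) (Mon_endn n k) (Mon (n-1) k)
       \<and> (\<forall>\<pi>\<in>Mon_endn n k. (-1::int) ^ dr (n-1) (tilden n \<pi>) = (-1) ^ dr n \<pi>)"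
proof -
  obtain m where n: "n = Suc m" and m: "1 \<le> m"
    using assms(1) by (cases n) auto
  have "(-1::int) ^ dr m (tilde1 n \<pi>) = (-1) ^ (dr n \<pi> + n)" if "\<pi> \<in> Mon_end1 n k" for \<pi>
  proof -
    have "dr n \<pi> + n = dr m (tilde1 n \<pi>) + 2 * n"
      using dr_tilde1[OF _ m] that n by simp
    then show ?thesis
      by (simp add: power_add power_mult)
  qed
  moreover have "dr m (tilden n \<pi>) = dr n \<pi>" if "\<pi> \<in> Mon_endn n k" for \<pi>
    using that n tilden_eq_self dr_Suc_fixed_last by (simp add: Mon_endn_def Mon_def)
  ultimately show ?thesis
    using bij_betw_tilde1[OF m assms(2)] bij_betw_tilden n by simp
qed

end
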